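(* Let $P$ be an $n\times n$ doubly stochastic matrix. Then $P$ is a Sarymsakov matrix if and only if $|F_P(\mathcal A)|>|\mathcal A|$ for every nonempty proper subset $\mathcal A\subsetneq\mathcal N$.
   Context: $\mathcal N=\{1,\ldots,n\}$. A matrix is stochastic if it is entrywise nonnegative with row sums $1$, and doubly stochastic if in addition its column sums are $1$. For stochastic $P$ and $\mathcal A\subseteq\mathcal N$, $F_P(\mathcal A)=\{j:\ p_{ij}>0\text{ for some } i\in\mathcal A\}$. A Sarymsakov matrix is a stochastic $P$ such that for any disjoint nonempty $\mathcal A,\tilde{\mathcal A}\subseteq\mathcal N$, either $F_P(\mathcal A)\cap F_P(\tilde{\mathcal A})\neq\emptyset$, or $F_P(\mathcal A)\cap F_P(\tilde{\mathcal A})=\emptyset$ and $|F_P(\mathcal A)\cup F_P(\tilde{\mathcal A})|>|\mathcal A\cup\tilde{\mathcal A}|$. *)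

theory Defs
  imports "HOL-Analysis.Analysis"
begin

text \<open>n x n real matrices are indexed by a finite type 'n; the index set N is UNIV.\<close>

definition stochastic :: "real^'n^'n \<Rightarrow> bool" where
  "stochastic P \<longleftrightarrow> (\<forall>i j. P $ i $ j \<ge> 0) \<and> (\<forall>i. (\<Sum>j\<in>UNIV. P $ i $ j) = 1)"

definition doubly_stochastic :: "real^'n^'n \<Rightarrow> bool" where
  "doubly_stochastic P \<longleftrightarrow> stochastic P \<and> (\<forall>j. (\<Sum>i\<in>UNIV. P $ i $ j) = 1)"

definition F :: "real^'n^'n \<Rightarrow> 'n set \<Rightarrow> 'n set" where
  "F P A = {j. \<exists>i\<in>A. P $ i $ j > 0}"

definition sarymsakov :: "real^'n^'n \<Rightarrow> bool" where
  "sarymsakov P \<longleftrightarrow> stochastic P \<and>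
     (\<forall>A B. A \<noteq> {} \<longrightarrow> B \<noteq> {} \<longrightarrow> A \<inter> B = {} \<longrightarrow>
        F P A \<inter> F P B \<noteq> {} \<or>
        (F P A \<inter> F P B = {} \<and> card (F P A \<union> F P B) > card (A \<union> B)))"

end

theory Submission
  imports Defs
begin

text \<open>Summing the entries of a doubly stochastic P over the rows A and the columns F P A counts
  |A| (each row of A carries its whole mass inside F P A) and |F P A| minus the mass that the rows
  outside A put into F P A. Hence |F P A| \<ge> |A|, with equality only if no row of -A reaches F P A,
  i.e. F P A and F P (-A) are disjoint. A Sarymsakov matrix forbids this for the pair A, -A, whose
  images cannot have more than n elements in total. Conversely, for any stochastic P the
  expansion condition gives the Sarymsakov property: apply it to A \<union> B, or, if A \<union> B is
  everything, to A and B separately and add.\<close>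

lemma F_Un: "F P (A \<union> B) = F P A \<union> F P B"
  unfolding F_def by auto

lemma stochastic_row_sum_F:
  assumes "stochastic P" and "i \<in> A"
  shows "(\<Sum>j\<in>F P A. P$i$j) = 1"
proof -
  have "(\<Sum>j\<in>F P A. P$i$j) = (\<Sum>j\<in>UNIV. P$i$j)"
  proof (rule sum.mono_neutral_left)
    show "\<forall>j\<in>UNIV - F P A. P$i$j = 0"
      using assms unfolding F_def stochastic_def by (force simp: not_less intro: antisym)
  qed auto
  then show ?thesis
    using assms(1) unfolding stochastic_def by simp
qed

lemma doubly_stochastic_card_F:
  fixes P :: "real^'n^'n"
  assumes "doubly_stochastic P"
  shows "real (card (F P A)) = real (card A) + (\<Sum>j\<in>F P A. \<Sum>i\<in>-A. P$i$j)"
proof -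
  have col: "\<And>j. (\<Sum>i\<in>UNIV. P$i$j) = 1" and st: "stochastic P"
    using assms unfolding doubly_stochastic_def by auto
  have split: "(\<Sum>i\<in>UNIV. P$i$j) = (\<Sum>i\<in>A. P$i$j) + (\<Sum>i\<in>-A. P$i$j)" for j
    using sum.union_disjoint[of A "-A" "\<lambda>i. P$i$j"] by (simp add: Compl_partition)
  have "real (card (F P A)) = (\<Sum>j\<in>F P A. \<Sum>i\<in>UNIV. P$i$j)"
    using col by simp
  also have "\<dots> = (\<Sum>i\<in>A. \<Sum>j\<in>F P A. P$i$j) + (\<Sum>j\<in>F P A. \<Sum>i\<in>-A. P$i$j)"
    by (simp add: split sum.distrib sum.swap[of _ "F P A"])
  also have "(\<Sum>i\<in>A. \<Sum>j\<in>F P A. P$i$j) = real (card A)"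
    using stochastic_row_sum_F[OF st] by simp
  finally show ?thesis .
qed

lemma doubly_stochastic_card_le_card_F:
  fixes P :: "real^'n^'n"
  assumes "doubly_stochastic P"
  shows "card A \<le> card (F P A)"
proof -
  have "0 \<le> (\<Sum>j\<in>F P A. \<Sum>i\<in>-A. P$i$j)"
    using assms unfolding doubly_stochastic_def stochastic_def by (simp add: sum_nonneg)
  then show ?thesis
    using doubly_stochastic_card_F[OF assms, of A] by linarith
qed

lemma doubly_stochastic_card_F_eq_imp_disjoint:
  fixes P :: "real^'n^'n"
  assumes "doubly_stochastic P" and "card (F P A) = card A"
  shows "F P A \<inter> F P (-A) = {}"
proof -
  have nn: "\<And>i j. P$i$j \<ge> 0"
    using assms(1) unfolding doubly_stochastic_def stochastic_def by auto
  have "(\<Sum>j\<in>F P A. \<Sum>i\<in>-A. P$i$j) = 0"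
    using doubly_stochastic_card_F[OF assms(1), of A] assms(2) by simp
  then have "\<forall>j\<in>F P A. \<forall>i\<in>-A. P$i$j = 0"
    using nn by (simp add: sum_nonneg_eq_0_iff sum_nonneg)
  then show ?thesis
    unfolding F_def by fastforce
qed

lemma sarymsakov_F_compl_overlap:
  fixes P :: "real^'n^'n"
  assumes "sarymsakov P" and "A \<noteq> {}" and "A \<subset> UNIV"
  shows "F P A \<inter> F P (-A) \<noteq> {}"
proof
  assume disj: "F P A \<inter> F P (-A) = {}"
  have "card (F P A \<union> F P (-A)) > card (A \<union> -A)"
  proof -
    have "-A \<noteq> {}"
      using assms(3) by auto
    then show ?thesis
      using assms(1,2) disj unfolding sarymsakov_def by (metis Compl_disjoint)
  qed
  moreover have "card (F P A \<union> F P (-A)) \<le> card (A \<union> -A)"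
    by (simp add: card_mono)
  ultimately show False
    by simp
qed

lemma expanding_stochastic_imp_sarymsakov:
  fixes P :: "real^'n^'n"
  assumes "stochastic P"
    and expand: "\<forall>A. A \<noteq> {} \<and> A \<subset> UNIV \<longrightarrow> card (F P A) > card A"
  shows "sarymsakov P"
  unfolding sarymsakov_def
proof (intro conjI assms(1) allI impI)
  fix A B :: "'n set"
  assume A: "A \<noteq> {}" and B: "B \<noteq> {}" and AB: "A \<inter> B = {}"
  show "F P A \<inter> F P B \<noteq> {} \<or> (F P A \<inter> F P B = {} \<and> card (F P A \<union> F P B) > card (A \<union> B))"
  proof (cases "F P A \<inter> F P B = {}")
    case disj: True
    have "card (F P A \<union> F P B) > card (A \<union> B)"
    proof (cases "A \<union> B = UNIV")
      case False
      then show ?thesis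
        using expand A by (auto simp: F_Un[symmetric])
    next
      case True
      then have "A \<subset> UNIV" "B \<subset> UNIV"
        using A B AB by auto
      then have "card (F P A) > card A" "card (F P B) > card B"
        using expand A B by auto
      then show ?thesis
        using disj AB by (simp add: card_Un_disjoint)
    qed
    then show ?thesis
      using disj by simp
  qed simp
qed

theorem lemma5:
  fixes P :: "real^'n^'n"
  assumes "doubly_stochastic P"
  shows "sarymsakov P \<longleftrightarrow> (\<forall>A. A \<noteq> {} \<and> A \<subset> UNIV \<longrightarrow> card (F P A) > card A)"
proof
  assume "sarymsakov P"
  show "\<forall>A. A \<noteq> {} \<and> A \<subset> UNIV \<longrightarrow> card (F P A) > card A"
  proof (intro allI impI)
    fix A :: "'n set"
    assume "A \<noteq> {} \<and> A \<subset> UNIV"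
    then have "F P A \<inter> F P (-A) \<noteq> {}"
      using sarymsakov_F_compl_overlap[OF \<open>sarymsakov P\<close>] by blast
    then have "card (F P A) \<noteq> card A"
      using doubly_stochastic_card_F_eq_imp_disjoint[OF assms] by blast
    then show "card (F P A) > card A"
      using doubly_stochastic_card_le_card_F[OF assms, of A] by linarith
  qed
next
  assume "\<forall>A. A \<noteq> {} \<and> A \<subset> UNIV \<longrightarrow> card (F P A) > card A"
  then show "sarymsakov P"
    using assms expanding_stochastic_imp_sarymsakov unfolding doubly_stochastic_def by blast
qed

end
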